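(* Assume $X$ satisfies condition (i). Let $p\ge1$ and $d\ge2$. There exists a finite constant $C$ (depending on $p$, $d$ and the law of $X$) such that for all $t\ge1$ and all $x\in W^d$ with $x_{i+1}-x_i\ge1$ for $1\le i\le d-1$, \[\big(\mathbb E_x|\Delta(S(t))|^p\big)^{1/p}\le C\,\Delta(x)\,t^{d^2}.\]
   Context: $X$ is real with $\mathbb E X=0$, $\mathrm{Var}X=1$ and (i) $\mathbb E e^{\delta X}<\infty$ for $|\delta|<\delta_0$, some $\delta_0>0$. $(e_{ij})$ i.i.d. exponential(1), $(X_{ij})$ i.i.d. copies of $X$ independent of them; $S_j(t)=x_j+\sum_{i\ge1}X_{ij}\mathbf 1\{\sum_{k=1}^ie_{kj}\le t\}$, $j=1,\dots,d$, under $\mathbf P_x$. $W^d=\{x_1<\dots<x_d\}$, $\Delta(x)=\prod_{i<j}(x_j-x_i)$. *)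

theory Defs
  imports "HOL-Probability.Probability"
begin

text \<open>Vandermonde product Delta(x) = prod over 1 <= i < j <= d of (x j - x i);
  vectors in R^d are functions nat => real indexed by 1..d.\<close>
definition Delta :: "nat \<Rightarrow> (nat \<Rightarrow> real) \<Rightarrow> real" where
  "Delta d x = (\<Prod>j\<in>{1..d}. \<Prod>i\<in>{1..<j}. x j - x i)"

definition weyl_chamber :: "nat \<Rightarrow> (nat \<Rightarrow> real) set" where
  "weyl_chamber d = {x. \<forall>i\<in>{1..<d}. x i < x (Suc i)}"

text \<open>Compound Poisson walk:
  S_j(t) = x_j + sum_{i>=1} X_{ij} 1{e_{1j}+...+e_{ij} <= t}
  (the sum over i >= 1 is written as a series over i+1, i >= 0).\<close>
definition cp_walk ::
  "(nat \<Rightarrow> real) \<Rightarrow> (nat \<Rightarrow> nat \<Rightarrow> 'a \<Rightarrow> real) \<Rightarrow> (nat \<Rightarrow> nat \<Rightarrow> 'a \<Rightarrow> real)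
    \<Rightarrow> real \<Rightarrow> 'a \<Rightarrow> nat \<Rightarrow> real" where
  "cp_walk x e Xs t \<omega> j =
     x j + (\<Sum>i. Xs (Suc i) j \<omega> *
              (if (\<Sum>k\<in>{1..Suc i}. e k j \<omega>) \<le> t then 1 else 0))"

end

theory Submission
  imports Defs
begin

(*
  Write S_j(t) - x_j as the series of the jumps X_{i+1,j} 1{T_ij <= t}, where the arrival
  times T_ij are Erlang distributed. Since neighbouring coordinates of x are at least 1 apart,
  |Delta(x + y)| <= Delta(x) (1 + sum_l |y_l|)^m with m = d(d-1)/2, so it suffices to bound
  E (1 + sum_ij |X_{i+1,j}| 1{T_ij <= t})^N by a constant times t^N for an integer N >= p m.
  A Chernoff bound gives P(T_ij <= t) <= q_i = min 1 (exp ((e^2 - 1) t - 2 (i + 1))), and AM-GM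
  gives E (|X| 1{T <= t})^N <= sqrt q_i (E |X|^(2N) + 1) / 2, so the jumps need not be
  independent of the waiting times. Jensen's inequality with the weights q_i^(1/(2N)), whose
  sum is O(t), bounds the moment for finitely many jumps, and monotone convergence passes to
  the whole series. The exponential moments only serve to make E |X|^(2N) finite.
*)

lemma power_div_fact_le_exp:
  fixes z :: real assumes "0 \<le> z"
  shows "z ^ n / fact n \<le> exp z"
proof -
  have "(\<Sum>m\<in>{n}. inverse (fact m) * z ^ m) \<le> (\<Sum>m. inverse (fact m) * z ^ m)"
    by (rule sum_le_suminf[OF summable_exp]) (use assms in auto)
  then show ?thesis by (simp add: exp_def field_simps)
qed

lemma abs_power_le_exp_sum:
  fixes y \<delta> :: real assumes "0 < \<delta>"
  shows "\<bar>y\<bar> ^ n \<le> fact n / \<delta> ^ n * (exp (\<delta> * y) + exp (- \<delta> * y))"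
proof -
  have "(\<delta> * \<bar>y\<bar>) ^ n / fact n \<le> exp (\<delta> * \<bar>y\<bar>)"
    using assms by (intro power_div_fact_le_exp) auto
  also have "\<dots> \<le> exp (\<delta> * y) + exp (- \<delta> * y)"
    by (cases "y \<ge> 0") (auto simp: add_increasing add_increasing2)
  finally show ?thesis
    using assms by (simp add: power_mult_distrib field_simps)
qed

lemma convex_on_power_nonneg: "convex_on {0::real..} (\<lambda>x. x ^ n)"
proof (cases "even n")
  case True
  then show ?thesis
    by (rule convex_on_subset[OF convex_power_even]) auto
next
  case False
  then show ?thesis using convex_power_odd by blast
qed

lemma power_sum_le_weighted:
  fixes w y :: "'b \<Rightarrow> real"
  assumes K: "finite K" "K \<noteq> {}" and w: "\<And>k. k \<in> K \<Longrightarrow> 0 < w k"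
    and y: "\<And>k. k \<in> K \<Longrightarrow> 0 \<le> y k" and n: "1 \<le> n"
  shows "(\<Sum>k\<in>K. y k) ^ n \<le> (\<Sum>k\<in>K. w k) ^ (n - 1) * (\<Sum>k\<in>K. y k ^ n / w k ^ (n - 1))"
proof -
  define W where "W = (\<Sum>k\<in>K. w k)"
  have W: "0 < W" unfolding W_def using K w by (intro sum_pos) auto
  have "(\<Sum>k\<in>K. (w k / W) *\<^sub>R (y k / w k)) ^ n \<le> (\<Sum>k\<in>K. (w k / W) * (y k / w k) ^ n)"
  proof (rule convex_on_sum[OF K convex_on_power_nonneg])
    show "(\<Sum>k\<in>K. w k / W) = 1" using W by (simp add: W_def sum_divide_distrib[symmetric])
  qed (use w y W in \<open>auto intro: less_imp_le divide_nonneg_pos\<close>)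
  moreover have "(\<Sum>k\<in>K. (w k / W) *\<^sub>R (y k / w k)) = (\<Sum>k\<in>K. y k) / W"
    and "(\<Sum>k\<in>K. (w k / W) * (y k / w k) ^ n) = (\<Sum>k\<in>K. y k ^ n / w k ^ (n - 1)) / W"
  proof -
    have "(w k / W) *\<^sub>R (y k / w k) = y k / W"
      and "(w k / W) * (y k / w k) ^ n = y k ^ n / w k ^ (n - 1) / W" if "k \<in> K" for k
      using w[OF that] n by (cases n; simp add: power_divide)+
    then show "(\<Sum>k\<in>K. (w k / W) *\<^sub>R (y k / w k)) = (\<Sum>k\<in>K. y k) / W"
      and "(\<Sum>k\<in>K. (w k / W) * (y k / w k) ^ n) = (\<Sum>k\<in>K. y k ^ n / w k ^ (n - 1)) / W"
      by (auto simp: sum_divide_distrib intro: sum.cong)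
  qed
  ultimately have "((\<Sum>k\<in>K. y k) / W) ^ n \<le> (\<Sum>k\<in>K. y k ^ n / w k ^ (n - 1)) / W"
    by simp
  then have "(\<Sum>k\<in>K. y k) ^ n \<le> (\<Sum>k\<in>K. y k ^ n / w k ^ (n - 1)) / W * W ^ n"
    using W by (simp add: power_divide divide_le_eq)
  also have "\<dots> = W ^ (n - 1) * (\<Sum>k\<in>K. y k ^ n / w k ^ (n - 1))"
    using W n by (cases n) auto
  finally show ?thesis by (simp add: W_def)
qed

lemma sum_powr_min_exp_le:
  fixes t s :: real
  assumes t: "1 \<le> t" and s: "0 < s"
  shows "(\<Sum>i<n. min 1 (exp ((exp 2 - 1) * t - 2 * Suc i)) powr s) \<le> (exp 2 + 1 / (1 - exp (- s))) * t"
proof -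
  define L where "L = (exp 2 - 1) * t"
  define r where "r = exp (- s)"
  have L: "0 \<le> L" using t by (simp add: L_def)
  have r: "0 < r" "r < 1" using s by (auto simp: r_def)
  have term_le: "min 1 (exp (L - 2 * Suc i)) powr s \<le> (if Suc i < L then 1 else 0) + r ^ Suc i" for i
  proof (cases "Suc i < L")
    case True
    have "min 1 (exp (L - 2 * Suc i)) powr s \<le> 1"
      using s by (intro powr_le1) auto
    then show ?thesis using True r by (simp add: add_increasing2)
  next
    case False
    then have "min 1 (exp (L - 2 * Suc i)) powr s \<le> exp (- real (Suc i)) powr s"
      using s by (intro powr_mono2) auto
    also have "\<dots> = r ^ Suc i"
      by (simp add: r_def powr_def exp_of_nat_mult[symmetric] algebra_simps flip: exp_add)
    finally show ?thesis using False by simp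
  qed
  have card_le: "real (card {i\<in>{..<n}. Suc i < L}) \<le> L + 1"
  proof -
    have "{i\<in>{..<n}. Suc i < L} \<subseteq> {..< nat \<lceil>L\<rceil>}" by auto linarith
    then have "card {i\<in>{..<n}. Suc i < L} \<le> nat \<lceil>L\<rceil>"
      using card_mono[of "{..< nat \<lceil>L\<rceil>}"] by simp
    then show ?thesis using L by linarith
  qed
  have geom_le: "(\<Sum>i<n. r ^ Suc i) \<le> 1 / (1 - r)"
  proof -
    have "(\<Sum>i<n. r ^ Suc i) \<le> (\<Sum>i<n. r ^ i)"
      using r by (intro sum_mono) (simp add: mult_left_le_one_le)
    also have "\<dots> = (1 - r ^ n) / (1 - r)" using r by (simp add: sum_gp_strict)
    also have "\<dots> \<le> 1 / (1 - r)" using r by (simp add: divide_right_mono)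
    finally show ?thesis .
  qed
  have "(\<Sum>i<n. min 1 (exp (L - 2 * Suc i)) powr s)
      \<le> (\<Sum>i<n. (if Suc i < L then 1 else 0) + r ^ Suc i)"
    by (intro sum_mono term_le)
  also have "\<dots> = real (card {i\<in>{..<n}. Suc i < L}) + (\<Sum>i<n. r ^ Suc i)"
    by (simp add: sum.distrib sum.If_cases Int_def conj_commute)
  also have "\<dots> \<le> L + 1 + 1 / (1 - r)"
    using card_le geom_le by linarith
  also have "\<dots> \<le> (exp 2 + 1 / (1 - r)) * t"
    using t r mult_le_cancel_left1[of "1 / (1 - r)" t] by (simp add: L_def algebra_simps)
  finally show ?thesis by (simp add: L_def r_def)
qed

lemma powr_inverse_le_of_le:
  fixes I D A t p :: real
  assumes I: "0 \<le> I" "I \<le> D powr p * (A * t ^ N)" and D: "0 \<le> D" and A: "0 \<le> A"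
    and t: "1 \<le> t" and p: "0 < p" and N: "real N \<le> p * real k"
  shows "I powr (1 / p) \<le> A powr (1 / p) * D * t ^ k"
proof -
  have "I powr (1 / p) \<le> (D powr p * (A * t ^ N)) powr (1 / p)"
    using I p by (intro powr_mono2) auto
  also have "\<dots> = D * A powr (1 / p) * t powr (N / p)"
    using D A t p by (simp add: powr_mult powr_powr powr_realpow[symmetric])
  also have "\<dots> \<le> D * A powr (1 / p) * t powr k"
    using D t p N by (intro mult_left_mono powr_mono) (auto simp: divide_le_eq mult.commute)
  finally show ?thesis
    using t by (simp add: powr_realpow mult_ac)
qed

lemma moment_exponent:
  fixes p :: real and d :: nat
  assumes p: "1 \<le> p" and d: "2 \<le> d"
  obtains N :: nat where "1 \<le> N" "p * real (\<Sum>j\<in>{1..d}. j - 1) \<le> real N" "real N \<le> p * real (d ^ 2)"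
proof
  define m where "m = (\<Sum>j\<in>{1..d}. j - 1)"
  have "2 - 1 \<le> m" unfolding m_def using d by (intro member_le_sum) auto
  then have m: "1 \<le> real m" by simp
  have "m \<le> (\<Sum>j\<in>{1..d}. d - 1)" unfolding m_def by (intro sum_mono) auto
  also have "\<dots> < d ^ 2" using d by (simp add: power2_eq_square)
  finally have "real m + 1 \<le> real (d ^ 2)" by linarith
  then have "p * real m + p \<le> p * real (d ^ 2)"
    using p mult_left_mono[of "real m + 1" "real (d ^ 2)" p] by (simp add: algebra_simps)
  moreover have "1 * 1 \<le> p * real m" using p m by (intro mult_mono) auto
  moreover have "real (nat \<lceil>p * real m\<rceil>) = of_int \<lceil>p * real m\<rceil>" using p m by simp
  ultimately show "1 \<le> nat \<lceil>p * real m\<rceil>" "p * real m \<le> real (nat \<lceil>p * real m\<rceil>)"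
    "real (nat \<lceil>p * real m\<rceil>) \<le> p * real (d ^ 2)"
    using p by linarith+
qed

section \<open>Moment bounds\<close>

lemma nn_integral_abs_power_bounded_of_exp_moments:
  fixes \<mu> :: "real measure"
  assumes sets: "sets \<mu> = sets borel"
    and exp_moments: "\<exists>\<delta>0>0. \<forall>\<delta>. \<bar>\<delta>\<bar> < \<delta>0 \<longrightarrow> integrable \<mu> (\<lambda>y. exp (\<delta> * y))"
  obtains c where "0 \<le> c" "(\<integral>\<^sup>+ y. ennreal (\<bar>y\<bar> ^ n) \<partial>\<mu>) \<le> ennreal c"
proof -
  obtain \<delta> where \<delta>: "0 < \<delta>"
    and exp_int: "integrable \<mu> (\<lambda>y. exp (\<delta> * y))" "integrable \<mu> (\<lambda>y. exp (- \<delta> * y))"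
  proof -
    obtain \<delta>0 where \<delta>0: "0 < \<delta>0"
      and exp_int: "\<And>\<delta>. \<bar>\<delta>\<bar> < \<delta>0 \<Longrightarrow> integrable \<mu> (\<lambda>y. exp (\<delta> * y))"
      using exp_moments by blast
    have "integrable \<mu> (\<lambda>y. exp (\<delta>0 / 2 * y))" "integrable \<mu> (\<lambda>y. exp (- (\<delta>0 / 2) * y))"
      by (rule exp_int; use \<delta>0 in simp)+
    then show thesis by (rule that[rotated]) (use \<delta>0 in simp)
  qed
  have "integrable \<mu> (\<lambda>y. \<bar>y\<bar> ^ n)"
  proof (rule Bochner_Integration.integrable_bound)
    show "integrable \<mu> (\<lambda>y. fact n / \<delta> ^ n * (exp (\<delta> * y) + exp (- \<delta> * y)))"
      using exp_int by auto
    show "(\<lambda>y. \<bar>y\<bar> ^ n) \<in> borel_measurable \<mu>"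
      unfolding measurable_cong_sets[OF sets refl] by measurable
    show "AE y in \<mu>. norm (\<bar>y\<bar> ^ n) \<le> norm (fact n / \<delta> ^ n * (exp (\<delta> * y) + exp (- \<delta> * y)))"
      using abs_power_le_exp_sum[OF \<delta>] \<delta> by (auto intro!: AE_I2 simp: abs_mult)
  qed
  then show thesis
    by (intro that[of "\<integral>y. \<bar>y\<bar> ^ n \<partial>\<mu>"]) (simp_all add: nn_integral_eq_integral)
qed

lemma integrable_integral_le_of_nn_integral_le:
  fixes f :: "'a \<Rightarrow> real"
  assumes f: "f \<in> borel_measurable M" "\<And>\<omega>. 0 \<le> f \<omega>"
    and le: "(\<integral>\<^sup>+ \<omega>. ennreal (f \<omega>) \<partial>M) \<le> ennreal B" and B: "0 \<le> B"
  shows "integrable M f \<and> integral\<^sup>L M f \<le> B"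
proof
  show int: "integrable M f"
    using f le by (intro integrableI_nonneg) (auto intro: le_less_trans)
  have "ennreal (integral\<^sup>L M f) \<le> ennreal B"
    using le nn_integral_eq_integral[OF int] f by simp
  then show "integral\<^sup>L M f \<le> B"
    using B by (simp add: ennreal_le_iff)
qed

lemma nn_integral_indicator_power_le:
  fixes X :: "'a \<Rightarrow> real"
  assumes [measurable]: "X \<in> borel_measurable M" "A \<in> sets M"
    and A: "emeasure M A \<le> ennreal q" and q: "0 < q"
    and moment: "(\<integral>\<^sup>+ \<omega>. ennreal (\<bar>X \<omega>\<bar> ^ (2 * n)) \<partial>M) \<le> ennreal c" and c: "0 \<le> c"
  shows "(\<integral>\<^sup>+ \<omega>. ennreal (indicator A \<omega> * \<bar>X \<omega>\<bar> ^ n) \<partial>M) \<le> ennreal (sqrt q * ((c + 1) / 2))"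
proof -
  define \<eta> where "\<eta> = sqrt q"
  have \<eta>: "0 < \<eta>" "\<eta> * \<eta> = q" using q by (auto simp: \<eta>_def)
  \<comment> \<open>AM-GM on \<open>A\<close>; the choice \<open>\<eta> = sqrt q\<close> balances the two terms after integration\<close>
  have pointwise: "ennreal (indicator A \<omega> * \<bar>X \<omega>\<bar> ^ n)
      \<le> ennreal (\<eta> / 2) * ennreal (\<bar>X \<omega>\<bar> ^ (2 * n)) + ennreal (1 / (2 * \<eta>)) * indicator A \<omega>" for \<omega>
  proof (cases "\<omega> \<in> A")
    case True
    define u where "u = \<bar>X \<omega>\<bar> ^ n"
    have "0 \<le> (\<eta> * u - 1)\<^sup>2" by simp
    then have "2 * \<eta> * u \<le> \<eta> * \<eta> * (u * u) + 1" by (simp add: power2_eq_square algebra_simps)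
    then have "u \<le> \<eta> / 2 * (u * u) + 1 / (2 * \<eta>)"
      using \<eta>(1) by (simp add: field_simps)
    moreover have "\<bar>X \<omega>\<bar> ^ (2 * n) = u * u" by (simp add: u_def mult_2 power_add)
    ultimately show ?thesis
      using True \<eta> by (simp add: u_def ennreal_mult'[symmetric] ennreal_plus[symmetric] del: ennreal_plus)
  qed simp
  have "(\<integral>\<^sup>+ \<omega>. ennreal (indicator A \<omega> * \<bar>X \<omega>\<bar> ^ n) \<partial>M)
      \<le> (\<integral>\<^sup>+ \<omega>. ennreal (\<eta> / 2) * ennreal (\<bar>X \<omega>\<bar> ^ (2 * n)) + ennreal (1 / (2 * \<eta>)) * indicator A \<omega> \<partial>M)"
    by (intro nn_integral_mono pointwise)
  also have "\<dots> = ennreal (\<eta> / 2) * (\<integral>\<^sup>+ \<omega>. ennreal (\<bar>X \<omega>\<bar> ^ (2 * n)) \<partial>M)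
      + ennreal (1 / (2 * \<eta>)) * emeasure M A"
    by (simp add: nn_integral_add nn_integral_cmult nn_integral_indicator)
  also have "\<dots> \<le> ennreal (\<eta> / 2) * ennreal c + ennreal (1 / (2 * \<eta>)) * ennreal q"
    by (intro add_mono mult_left_mono moment A) auto
  also have "\<dots> = ennreal (\<eta> / 2 * c + 1 / (2 * \<eta>) * q)"
    using \<eta> c q by (simp add: ennreal_mult'[symmetric] ennreal_plus[symmetric] del: ennreal_plus)
  also have "\<eta> / 2 * c + 1 / (2 * \<eta>) * q = sqrt q * ((c + 1) / 2)"
    using \<eta> by (simp add: \<eta>_def[symmetric] field_simps)
  finally show ?thesis .
qed

lemma nn_integral_power_sum_le:
  fixes Y :: "'b \<Rightarrow> 'a \<Rightarrow> real" and w :: "'b \<Rightarrow> real"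
  assumes K: "finite K" "K \<noteq> {}" and n: "1 \<le> n" and C: "0 \<le> C"
    and w: "\<And>k. k \<in> K \<Longrightarrow> 0 < w k"
    and Y: "\<And>k. k \<in> K \<Longrightarrow> Y k \<in> borel_measurable M"
    and Y_nonneg: "\<And>k \<omega>. k \<in> K \<Longrightarrow> 0 \<le> Y k \<omega>"
    and moment: "\<And>k. k \<in> K \<Longrightarrow> (\<integral>\<^sup>+ \<omega>. ennreal (Y k \<omega> ^ n) \<partial>M) \<le> ennreal (w k ^ n * C)"
  shows "(\<integral>\<^sup>+ \<omega>. ennreal ((\<Sum>k\<in>K. Y k \<omega>) ^ n) \<partial>M) \<le> ennreal (C * (\<Sum>k\<in>K. w k) ^ n)"
proof -
  define W where "W = (\<Sum>k\<in>K. w k)"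
  define b where "b k = 1 / w k ^ (n - 1)" for k
  have b: "0 \<le> b k" if "k \<in> K" for k using w[OF that] by (simp add: b_def)
  have [measurable]: "(\<lambda>\<omega>. ennreal (Y k \<omega> ^ n)) \<in> borel_measurable M" if "k \<in> K" for k
    using Y[OF that] by measurable
  have "(\<integral>\<^sup>+ \<omega>. ennreal ((\<Sum>k\<in>K. Y k \<omega>) ^ n) \<partial>M)
      \<le> (\<integral>\<^sup>+ \<omega>. ennreal (W ^ (n - 1)) * (\<Sum>k\<in>K. ennreal (b k) * ennreal (Y k \<omega> ^ n)) \<partial>M)"
  proof (rule nn_integral_mono)
    fix \<omega>
    have "(\<Sum>k\<in>K. Y k \<omega>) ^ n \<le> W ^ (n - 1) * (\<Sum>k\<in>K. b k * Y k \<omega> ^ n)"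
      using power_sum_le_weighted[OF K w Y_nonneg n] by (simp add: W_def b_def)
    moreover have "(\<Sum>k\<in>K. ennreal (b k) * ennreal (Y k \<omega> ^ n)) = ennreal (\<Sum>k\<in>K. b k * Y k \<omega> ^ n)"
      using b Y_nonneg by (simp add: ennreal_mult'[symmetric] sum_ennreal)
    ultimately show "ennreal ((\<Sum>k\<in>K. Y k \<omega>) ^ n)
        \<le> ennreal (W ^ (n - 1)) * (\<Sum>k\<in>K. ennreal (b k) * ennreal (Y k \<omega> ^ n))"
      using K w by (simp add: W_def ennreal_mult'[symmetric] ennreal_leI sum_nonneg less_imp_le)
  qed
  also have "\<dots> = ennreal (W ^ (n - 1)) * (\<Sum>k\<in>K. ennreal (b k) * (\<integral>\<^sup>+ \<omega>. ennreal (Y k \<omega> ^ n) \<partial>M))"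
    by (simp add: nn_integral_cmult nn_integral_sum)
  also have "\<dots> \<le> ennreal (W ^ (n - 1)) * (\<Sum>k\<in>K. ennreal (b k) * ennreal (w k ^ n * C))"
    by (intro mult_left_mono sum_mono moment) auto
  also have "\<dots> = ennreal (W ^ (n - 1) * (\<Sum>k\<in>K. w k * C))"
  proof -
    have "b k * (w k ^ n * C) = w k * C" if "k \<in> K" for k
      using w[OF that] n by (cases n) (auto simp: b_def)
    then have "(\<Sum>k\<in>K. b k * (w k ^ n * C)) = (\<Sum>k\<in>K. w k * C)"
      by (rule sum.cong[OF refl])
    with b w C K show ?thesis
      by (simp add: W_def ennreal_mult'[symmetric] sum_ennreal less_imp_le sum_nonneg)
  qed
  also have "W ^ (n - 1) * (\<Sum>k\<in>K. w k * C) = C * W ^ n"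
    using n by (cases n) (auto simp: W_def sum_distrib_right[symmetric])
  finally show ?thesis by (simp add: W_def)
qed

lemma (in prob_space) nn_integral_one_plus_power_sum_le:
  fixes Y :: "'b \<Rightarrow> 'a \<Rightarrow> real" and w :: "'b \<Rightarrow> real"
  assumes K: "finite K" and n: "1 \<le> n" and C: "1 \<le> C"
    and w: "\<And>k. k \<in> K \<Longrightarrow> 0 < w k"
    and Y: "\<And>k. k \<in> K \<Longrightarrow> Y k \<in> borel_measurable M"
    and Y_nonneg: "\<And>k \<omega>. k \<in> K \<Longrightarrow> 0 \<le> Y k \<omega>"
    and moment: "\<And>k. k \<in> K \<Longrightarrow> (\<integral>\<^sup>+ \<omega>. ennreal (Y k \<omega> ^ n) \<partial>M) \<le> ennreal (w k ^ n * C)"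
  shows "(\<integral>\<^sup>+ \<omega>. ennreal ((1 + (\<Sum>k\<in>K. Y k \<omega>)) ^ n) \<partial>M) \<le> ennreal (C * (1 + (\<Sum>k\<in>K. w k)) ^ n)"
proof -
  define K' where "K' = insert None (Some ` K)"
  define Y' where "Y' k = (case k of None \<Rightarrow> (\<lambda>_. 1) | Some k \<Rightarrow> Y k)" for k
  define w' where "w' k = (case k of None \<Rightarrow> 1 | Some k \<Rightarrow> w k)" for k
  have sum_K': "(\<Sum>k\<in>K'. f k) = f None + (\<Sum>k\<in>K. f (Some k))" for f :: "'b option \<Rightarrow> real"
    using K by (simp add: K'_def sum.reindex)
  have "(\<integral>\<^sup>+ \<omega>. ennreal ((\<Sum>k\<in>K'. Y' k \<omega>) ^ n) \<partial>M) \<le> ennreal (C * (\<Sum>k\<in>K'. w' k) ^ n)"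
    by (rule nn_integral_power_sum_le)
      (use K n C w Y Y_nonneg moment in \<open>auto simp: K'_def Y'_def w'_def emeasure_space_1\<close>)
  then show ?thesis by (simp add: sum_K' Y'_def w'_def)
qed

lemma ennreal_power_abs_suminf_le_SUP:
  fixes Z :: "'b \<Rightarrow> nat \<Rightarrow> real"
  assumes L: "finite L"
  shows "ennreal ((1 + (\<Sum>l\<in>L. \<bar>\<Sum>i. Z l i\<bar>)) ^ N)
    \<le> (SUP n. ennreal ((1 + (\<Sum>l\<in>L. \<Sum>i<n. \<bar>Z l i\<bar>)) ^ N))"
    (is "_ \<le> (SUP n. ennreal (?F n))")
proof (cases "N = 0 \<or> (SUP n. ennreal (?F n)) = \<top>")
  case True
  then show ?thesis
  proof
    assume "N = 0"
    then show ?thesis by simp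
  qed (metis top_greatest)
next
  case False
  then have N: "1 \<le> N" by simp
  have finite_SUP: "(SUP n. ennreal (?F n)) < \<top>" using False less_top by blast
  define B where "B = enn2real (SUP n. ennreal (?F n))"
  have F_le: "?F n \<le> B" for n
  proof -
    have "ennreal (?F n) \<le> (SUP n. ennreal (?F n))" by (rule SUP_upper) simp
    also have "\<dots> = ennreal B" using finite_SUP by (simp only: B_def ennreal_enn2real)
    finally have "ennreal (?F n) \<le> ennreal B" .
    then show ?thesis by (simp add: B_def ennreal_le_iff)
  qed
  \<comment> \<open>a finite supremum forces absolute convergence, so no \<open>suminf\<close> is a junk value\<close>
  have summable: "summable (Z l)" if "l \<in> L" for l
  proof (rule summable_rabs_cancel, rule summableI_nonneg_bounded)
    fix n
    have "(\<Sum>i<n. \<bar>Z l i\<bar>) \<le> (\<Sum>l\<in>L. \<Sum>i<n. \<bar>Z l i\<bar>)"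
      using L that by (intro member_le_sum sum_nonneg) auto
    also have "\<dots> \<le> 1 + (\<Sum>l\<in>L. \<Sum>i<n. \<bar>Z l i\<bar>)" by simp
    also have "\<dots> \<le> ?F n"
      using N by (intro self_le_power) (auto intro!: sum_nonneg)
    finally show "(\<Sum>i<n. \<bar>Z l i\<bar>) \<le> B" using F_le[of n] by linarith
  qed simp
  define G where "G n = (1 + (\<Sum>l\<in>L. \<bar>\<Sum>i<n. Z l i\<bar>)) ^ N" for n
  have G_lim: "G \<longlonglongrightarrow> (1 + (\<Sum>l\<in>L. \<bar>\<Sum>i. Z l i\<bar>)) ^ N"
    unfolding G_def by (intro tendsto_intros summable_LIMSEQ summable)
  have G_le: "G n \<le> ?F n" for n
    unfolding G_def by (intro power_mono add_left_mono sum_mono sum_abs) (auto intro!: sum_nonneg)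
  show ?thesis
  proof (rule LIMSEQ_le_const2)
    show "(\<lambda>n. ennreal (G n)) \<longlonglongrightarrow> ennreal ((1 + (\<Sum>l\<in>L. \<bar>\<Sum>i. Z l i\<bar>)) ^ N)"
      using G_lim by (rule tendsto_ennrealI)
    show "\<exists>n0. \<forall>n\<ge>n0. ennreal (G n) \<le> (SUP n. ennreal (?F n))"
    proof (intro exI allI impI)
      fix n
      have "ennreal (G n) \<le> ennreal (?F n)" using G_le by (rule ennreal_leI)
      also have "\<dots> \<le> (SUP n. ennreal (?F n))" by (rule SUP_upper) simp
      finally show "ennreal (G n) \<le> (SUP n. ennreal (?F n))" .
    qed
  qed
qed

section \<open>Tails of Erlang distributions\<close>

lemma nn_integral_erlang_density_exp:
  fixes c :: real assumes c: "0 < c"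
  shows "(\<integral>\<^sup>+ x. ennreal (erlang_density k 1 x * exp (- (c - 1) * x)) \<partial>lborel) = ennreal (1 / c ^ Suc k)"
proof -
  have eq: "\<And>x. indicator {0..} (x / c) = indicator {0..} x"
    using c by (simp add: field_simps split: split_indicator)
  have "(\<integral>\<^sup>+ x. ennreal (erlang_density k 1 x * exp (- (c - 1) * x)) \<partial>lborel) =
    (\<integral>\<^sup>+ x. (1 / (fact k * c ^ k)) * (ennreal ((c * x) ^ k * exp (- (c * x))) * indicator {0..} x) \<partial>lborel)"
    using c by (intro nn_integral_cong)
       (auto simp: erlang_density_def power_mult_distrib ennreal_mult'[symmetric] mult_exp_exp algebra_simps
             split: split_indicator)
  also have "\<dots> = (1 / (fact k * c ^ k)) * (\<integral>\<^sup>+ x. ennreal ((c * x) ^ k * exp (- (c * x))) * indicator {0..} x \<partial>lborel)"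
    by (intro nn_integral_cmult) auto
  also have "\<dots> = ennreal (1 / (fact k * c ^ k)) * ((1 / c) * (\<integral>\<^sup>+ x. ennreal (x ^ k * exp (- x)) * indicator {0..} x \<partial>lborel))"
    using c by (subst nn_integral_real_affine[where c="1 / c" and t=0]) (auto simp: field_simps eq)
  also have "\<dots> = ennreal (1 / c ^ Suc k)"
    using c by (subst nn_intergal_power_times_exp_Ici) (auto simp: ennreal_mult'[symmetric] field_simps)
  finally show ?thesis .
qed

lemma (in prob_space) erlang_distributed_le_exp_bound:
  assumes T: "distributed M lborel T (erlang_density k 1)" and \<theta>: "0 < \<theta>"
  shows "emeasure M {\<omega>\<in>space M. T \<omega> \<le> t} \<le> ennreal (exp (\<theta> * t) / (1 + \<theta>) ^ Suc k)"
proof -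
  have [measurable]: "T \<in> borel_measurable M" using distributed_measurable[OF T] by simp
  have "emeasure M {\<omega>\<in>space M. T \<omega> \<le> t} = (\<integral>\<^sup>+ \<omega>. indicator {\<omega>\<in>space M. T \<omega> \<le> t} \<omega> \<partial>M)"
    by (simp add: nn_integral_indicator)
  also have "\<dots> \<le> (\<integral>\<^sup>+ \<omega>. ennreal (exp (\<theta> * t)) * ennreal (exp (- \<theta> * T \<omega>)) \<partial>M)"
  proof (intro nn_integral_mono)
    fix \<omega>
    have "T \<omega> \<le> t \<Longrightarrow> 1 \<le> exp (\<theta> * t) * exp (- \<theta> * T \<omega>)"
      using \<theta> by (simp add: mult_exp_exp algebra_simps mult_left_mono)
    then show "indicator {\<omega> \<in> space M. T \<omega> \<le> t} \<omega> \<le> ennreal (exp (\<theta> * t)) * ennreal (exp (- \<theta> * T \<omega>))"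
      by (auto simp: indicator_def ennreal_mult'[symmetric] ennreal_ge_1)
  qed
  also have "\<dots> = ennreal (exp (\<theta> * t)) * (\<integral>\<^sup>+ x. ennreal (erlang_density k 1 x) * ennreal (exp (- \<theta> * x)) \<partial>lborel)"
    by (simp add: nn_integral_cmult distributed_nn_integral[OF T])
  also have "(\<integral>\<^sup>+ x. ennreal (erlang_density k 1 x) * ennreal (exp (- \<theta> * x)) \<partial>lborel)
      = ennreal (1 / (1 + \<theta>) ^ Suc k)"
    using nn_integral_erlang_density_exp[of "1 + \<theta>" k] \<theta> by (simp add: ennreal_mult')
  finally show ?thesis by (simp add: ennreal_mult'[symmetric])
qed

section \<open>The Vandermonde product\<close>

lemma diff_ge_1_of_gaps:
  fixes x :: "nat \<Rightarrow> real"
  assumes gaps: "\<forall>i\<in>{1..<d}. x (Suc i) - x i \<ge> 1" and ij: "1 \<le> i" "i < j" "j \<le> d"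
  shows "x j - x i \<ge> 1"
  using ij
proof (induction j)
  case (Suc j)
  show ?case
  proof (cases "i = j")
    case True
    then show ?thesis using gaps Suc.prems by auto
  next
    case False
    then have "x j - x i \<ge> 1" using Suc by auto
    moreover have "x (Suc j) - x j \<ge> 1" using gaps Suc.prems by auto
    ultimately show ?thesis by linarith
  qed
qed simp

lemma Delta_nonneg_of_gaps:
  assumes "\<forall>i\<in>{1..<d}. x (Suc i) - x i \<ge> 1"
  shows "0 \<le> Delta d x"
  unfolding Delta_def by (intro prod_nonneg) (use diff_ge_1_of_gaps[OF assms] in fastforce)

lemma abs_Delta_add_le:
  fixes x Y :: "nat \<Rightarrow> real"
  assumes gaps: "\<forall>i\<in>{1..<d}. x (Suc i) - x i \<ge> 1"
  shows "\<bar>Delta d (\<lambda>j. x j + Y j)\<bar> \<le> Delta d x * (1 + (\<Sum>l\<in>{1..d}. \<bar>Y l\<bar>)) ^ (\<Sum>j\<in>{1..d}. j - 1)"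
proof -
  define U where "U = (\<Sum>l\<in>{1..d}. \<bar>Y l\<bar>)"
  have U: "0 \<le> U" unfolding U_def by (intro sum_nonneg) auto
  \<comment> \<open>gaps of size at least 1 absorb the perturbation multiplicatively\<close>
  have factor_le: "\<bar>(x j + Y j) - (x i + Y i)\<bar> \<le> (x j - x i) * (1 + U)"
    if "j \<in> {1..d}" "i \<in> {1..<j}" for i j
  proof -
    have gap: "x j - x i \<ge> 1" using diff_ge_1_of_gaps[OF gaps, of i j] that by auto
    have "\<bar>Y j\<bar> + \<bar>Y i\<bar> = (\<Sum>l\<in>{i,j}. \<bar>Y l\<bar>)" using that by auto
    also have "\<dots> \<le> U" unfolding U_def using that by (intro sum_mono2) auto
    finally have "\<bar>(x j + Y j) - (x i + Y i)\<bar> \<le> (x j - x i) + U" using gap by linarith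
    also have "\<dots> \<le> (x j - x i) + (x j - x i) * U" using gap U by (simp add: mult_le_cancel_right1)
    finally show ?thesis by (simp add: algebra_simps)
  qed
  have "\<bar>Delta d (\<lambda>j. x j + Y j)\<bar> = (\<Prod>j\<in>{1..d}. \<Prod>i\<in>{1..<j}. \<bar>(x j + Y j) - (x i + Y i)\<bar>)"
    unfolding Delta_def by (simp add: abs_prod)
  also have "\<dots> \<le> (\<Prod>j\<in>{1..d}. \<Prod>i\<in>{1..<j}. (x j - x i) * (1 + U))"
    by (intro prod_mono conjI prod_nonneg) (auto intro: factor_le)
  also have "\<dots> = Delta d x * (1 + U) ^ (\<Sum>j\<in>{1..d}. j - 1)"
    by (simp add: prod.distrib Delta_def power_sum)
  finally show ?thesis by (simp add: U_def)
qed

lemma abs_Delta_add_powr_le: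
  fixes x Y :: "nat \<Rightarrow> real" and p :: real
  assumes gaps: "\<forall>i\<in>{1..<d}. x (Suc i) - x i \<ge> 1" and p: "0 < p"
    and N: "p * real (\<Sum>j\<in>{1..d}. j - 1) \<le> real N"
  shows "\<bar>Delta d (\<lambda>j. x j + Y j)\<bar> powr p \<le> Delta d x powr p * (1 + (\<Sum>l\<in>{1..d}. \<bar>Y l\<bar>)) ^ N"
proof -
  define U where "U = (\<Sum>l\<in>{1..d}. \<bar>Y l\<bar>)"
  define m where "m = (\<Sum>j\<in>{1..d}. j - 1)"
  have U: "0 \<le> U" unfolding U_def by (intro sum_nonneg) auto
  have "\<bar>Delta d (\<lambda>j. x j + Y j)\<bar> powr p \<le> (Delta d x * (1 + U) ^ m) powr p"
    using abs_Delta_add_le[OF gaps, of Y] p by (intro powr_mono2) (auto simp: U_def m_def)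
  also have "\<dots> = Delta d x powr p * (1 + U) powr (m * p)"
    using U by (simp add: powr_mult powr_realpow[symmetric] powr_powr)
  also have "\<dots> \<le> Delta d x powr p * (1 + U) powr N"
    using U N by (intro mult_left_mono powr_mono) (auto simp: m_def mult.commute)
  also have "\<dots> = Delta d x powr p * (1 + U) ^ N"
    using U by (simp add: powr_realpow)
  finally show ?thesis by (simp add: U_def)
qed

section \<open>Compound Poisson walks\<close>

(* c bounds E |X|^(2N): the first factor comes from the AM-GM step, the second from the sum
   of the Jensen weights. *)
definition displacement_moment_const :: "nat \<Rightarrow> real \<Rightarrow> nat \<Rightarrow> real" where
  "displacement_moment_const d c N =
     max 1 ((c + 1) / 2) * (1 + d * (exp 2 + 1 / (1 - exp (- 1 / (2 * real N))))) ^ N"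

locale compound_poisson_walks = prob_space M for M :: "'a measure" +
  fixes \<mu> :: "real measure" and d :: nat and e Xs :: "nat \<Rightarrow> nat \<Rightarrow> 'a \<Rightarrow> real"
  assumes waiting_time_distributed:
      "\<And>i j. 1 \<le> i \<Longrightarrow> j \<in> {1..d} \<Longrightarrow> distributed M lborel (e i j) (exponential_density 1)"
    and jump_measurable: "\<And>i j. 1 \<le> i \<Longrightarrow> j \<in> {1..d} \<Longrightarrow> Xs i j \<in> borel_measurable M"
    and jump_distr: "\<And>i j. 1 \<le> i \<Longrightarrow> j \<in> {1..d} \<Longrightarrow> distr M borel (Xs i j) = \<mu>"
    and indep: "indep_vars (\<lambda>_. borel) (\<lambda>k. case k of Inl (i, j) \<Rightarrow> e i j | Inr (i, j) \<Rightarrow> Xs i j)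
      (Inl ` ({1..} \<times> {1..d}) \<union> Inr ` ({1..} \<times> {1..d}))"
begin

(* Jumps are indexed from 0, so arrival_time j i is the time of the (i+1)-st jump of coordinate j,
   while the waiting times e k j are indexed from k = 1. *)
definition arrival_time :: "nat \<Rightarrow> nat \<Rightarrow> 'a \<Rightarrow> real" where
  "arrival_time j i \<omega> = (\<Sum>k\<in>{1..Suc i}. e k j \<omega>)"

definition jump_by :: "real \<Rightarrow> nat \<Rightarrow> nat \<Rightarrow> 'a \<Rightarrow> real" where
  "jump_by t j i \<omega> = Xs (Suc i) j \<omega> * (if arrival_time j i \<omega> \<le> t then 1 else 0)"

lemma cp_walk_eq: "cp_walk x e Xs t \<omega> j = x j + (\<Sum>i. jump_by t j i \<omega>)"
  by (simp add: cp_walk_def jump_by_def arrival_time_def)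

lemma waiting_time_measurable: "1 \<le> i \<Longrightarrow> j \<in> {1..d} \<Longrightarrow> e i j \<in> borel_measurable M"
  using distributed_measurable[OF waiting_time_distributed] by simp

lemma arrival_time_measurable: "j \<in> {1..d} \<Longrightarrow> arrival_time j i \<in> borel_measurable M"
  unfolding arrival_time_def by (intro borel_measurable_sum waiting_time_measurable) auto

lemma jump_by_measurable:
  assumes "j \<in> {1..d}"
  shows "jump_by t j i \<in> borel_measurable M"
proof -
  have [measurable]: "Xs (Suc i) j \<in> borel_measurable M" "arrival_time j i \<in> borel_measurable M"
    using assms by (simp_all add: jump_measurable arrival_time_measurable)
  show ?thesis unfolding jump_by_def by measurable
qed

lemma cp_walk_measurable: "j \<in> {1..d} \<Longrightarrow> (\<lambda>\<omega>. cp_walk x e Xs t \<omega> j) \<in> borel_measurable M"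
  unfolding cp_walk_eq by (intro borel_measurable_add borel_measurable_suminf jump_by_measurable) auto

lemma Delta_cp_walk_measurable: "(\<lambda>\<omega>. Delta d (cp_walk x e Xs t \<omega>)) \<in> borel_measurable M"
  unfolding Delta_def by (intro borel_measurable_prod borel_measurable_diff cp_walk_measurable) auto

lemma arrival_time_distributed:
  assumes j: "j \<in> {1..d}"
  shows "distributed M lborel (arrival_time j i) (erlang_density i 1)"
proof -
  let ?Y = "\<lambda>k. case k of Inl (i, j) \<Rightarrow> e i j | Inr (i, j) \<Rightarrow> Xs i j"
  define I :: "(nat \<times> nat + nat \<times> nat) set" where "I = (\<lambda>k. Inl (k, j)) ` {1..Suc i}"
  have ind: "indep_vars (\<lambda>_. borel) ?Y I"
    by (rule indep_vars_subset[OF indep]) (use j in \<open>auto simp: I_def\<close>)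
  have "distributed M lborel (\<lambda>\<omega>. \<Sum>k\<in>I. ?Y k \<omega>) (erlang_density (card I - 1) 1)"
    by (rule exponential_distributed_sum[OF _ _ _ _ ind]) (use j in \<open>auto simp: I_def intro!: waiting_time_distributed\<close>)
  moreover have "card I = Suc i" by (simp add: I_def card_image inj_on_def)
  moreover have "(\<lambda>\<omega>. \<Sum>k\<in>I. ?Y k \<omega>) = arrival_time j i"
    by (simp add: I_def sum.reindex inj_on_def arrival_time_def fun_eq_iff)
  ultimately show ?thesis by (simp only: diff_Suc_1)
qed

lemma prob_arrival_time_le:
  assumes "j \<in> {1..d}"
  shows "emeasure M {\<omega>\<in>space M. arrival_time j i \<omega> \<le> t} \<le> ennreal (min 1 (exp ((exp 2 - 1) * t - 2 * Suc i)))"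
proof -
  have "emeasure M {\<omega>\<in>space M. arrival_time j i \<omega> \<le> t}
      \<le> ennreal (exp ((exp 2 - 1) * t) / (1 + (exp 2 - 1)) ^ Suc i)"
    by (rule erlang_distributed_le_exp_bound[OF arrival_time_distributed[OF assms]]) simp
  also have "exp ((exp 2 - 1) * t) / (1 + (exp 2 - 1)) ^ Suc i = exp ((exp 2 - 1) * t - 2 * Suc i)"
  proof -
    have "exp (real (2 * Suc i)) = exp 2 ^ Suc i"
      by (subst exp_of_nat_mult[symmetric]) simp
    then show ?thesis by (simp add: exp_diff)
  qed
  finally have "emeasure M {\<omega>\<in>space M. arrival_time j i \<omega> \<le> t} \<le> ennreal (exp ((exp 2 - 1) * t - 2 * Suc i))" .
  moreover have "emeasure M {\<omega>\<in>space M. arrival_time j i \<omega> \<le> t} \<le> ennreal 1"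
    using emeasure_le_1 by simp
  ultimately show ?thesis
    by (cases "exp ((exp 2 - 1) * t - 2 * Suc i) \<le> 1") (simp_all only: min_absorb1 min_absorb2 not_le less_imp_le)
qed

lemma nn_integral_jump_by_power_le:
  assumes j: "j \<in> {1..d}" and N: "1 \<le> N"
    and moment: "(\<integral>\<^sup>+ y. ennreal (\<bar>y\<bar> ^ (2 * N)) \<partial>\<mu>) \<le> ennreal c" and c: "0 \<le> c"
  shows "(\<integral>\<^sup>+ \<omega>. ennreal (\<bar>jump_by t j i \<omega>\<bar> ^ N) \<partial>M)
    \<le> ennreal (sqrt (min 1 (exp ((exp 2 - 1) * t - 2 * Suc i))) * ((c + 1) / 2))"
proof -
  define A where "A = {\<omega>\<in>space M. arrival_time j i \<omega> \<le> t}"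
  have [measurable]: "Xs (Suc i) j \<in> borel_measurable M" "arrival_time j i \<in> borel_measurable M"
    using j by (simp_all add: jump_measurable arrival_time_measurable)
  have "(\<integral>\<^sup>+ \<omega>. ennreal (\<bar>jump_by t j i \<omega>\<bar> ^ N) \<partial>M)
      = (\<integral>\<^sup>+ \<omega>. ennreal (indicator A \<omega> * \<bar>Xs (Suc i) j \<omega>\<bar> ^ N) \<partial>M)"
    using N by (intro nn_integral_cong) (simp add: jump_by_def A_def abs_mult indicator_def)
  also have "\<dots> \<le> ennreal (sqrt (min 1 (exp ((exp 2 - 1) * t - 2 * Suc i))) * ((c + 1) / 2))"
  proof (rule nn_integral_indicator_power_le)
    show "A \<in> sets M" unfolding A_def by measurable
    show "emeasure M A \<le> ennreal (min 1 (exp ((exp 2 - 1) * t - 2 * Suc i)))"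
      unfolding A_def by (rule prob_arrival_time_le[OF j])
    have "(\<integral>\<^sup>+ \<omega>. ennreal (\<bar>Xs (Suc i) j \<omega>\<bar> ^ (2 * N)) \<partial>M)
        = (\<integral>\<^sup>+ y. ennreal (\<bar>y\<bar> ^ (2 * N)) \<partial>distr M borel (Xs (Suc i) j))"
      by (simp add: nn_integral_distr)
    then show "(\<integral>\<^sup>+ \<omega>. ennreal (\<bar>Xs (Suc i) j \<omega>\<bar> ^ (2 * N)) \<partial>M) \<le> ennreal c"
      using moment j by (simp add: jump_distr)
  qed (use c in auto)
  finally show ?thesis .
qed

lemma nn_integral_partial_jumps_power_le:
  assumes N: "1 \<le> N" and t: "1 \<le> t"
    and moment: "(\<integral>\<^sup>+ y. ennreal (\<bar>y\<bar> ^ (2 * N)) \<partial>\<mu>) \<le> ennreal c" and c: "0 \<le> c"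
  shows "(\<integral>\<^sup>+ \<omega>. ennreal ((1 + (\<Sum>j\<in>{1..d}. \<Sum>i<n. \<bar>jump_by t j i \<omega>\<bar>)) ^ N) \<partial>M)
    \<le> ennreal (displacement_moment_const d c N * t ^ N)"
proof -
  define C where "C = max 1 ((c + 1) / 2)"
  define K0 where "K0 = 1 + d * (exp 2 + 1 / (1 - exp (- 1 / (2 * real N))))"
  define q where "q i = min 1 (exp ((exp 2 - 1) * t - 2 * Suc i))" for i
  \<comment> \<open>Jensen weights with \<open>a i ^ N = sqrt (q i)\<close>, matching the moment bound of the \<open>i\<close>-th jump\<close>
  define a where "a i = q i powr (1 / (2 * real N))" for i
  have q: "0 < q i" for i by (simp add: q_def)
  have a: "0 < a i" "a i ^ N = sqrt (q i)" for i
    using q[of i] N by (simp_all add: a_def powr_half_sqrt[symmetric] powr_power)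
  have weights: "1 + (\<Sum>k\<in>{1..d} \<times> {..<n}. a (snd k)) \<le> K0 * t"
  proof -
    have "(\<Sum>k\<in>{1..d} \<times> {..<n}. a (snd k)) = (\<Sum>j\<in>{1..d}. \<Sum>i<n. a i)"
      by (subst sum.cartesian_product) (simp add: split_def)
    also have "\<dots> = d * (\<Sum>i<n. a i)" by simp
    also have "\<dots> \<le> d * ((exp 2 + 1 / (1 - exp (- 1 / (2 * real N)))) * t)"
      using sum_powr_min_exp_le[OF t, of "1 / (2 * real N)" n] N
      by (intro mult_left_mono) (simp_all add: a_def q_def)
    finally show ?thesis
      using t by (simp add: K0_def algebra_simps)
  qed
  have "(\<integral>\<^sup>+ \<omega>. ennreal ((1 + (\<Sum>j\<in>{1..d}. \<Sum>i<n. \<bar>jump_by t j i \<omega>\<bar>)) ^ N) \<partial>M)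
      = (\<integral>\<^sup>+ \<omega>. ennreal ((1 + (\<Sum>k\<in>{1..d} \<times> {..<n}. \<bar>jump_by t (fst k) (snd k) \<omega>\<bar>)) ^ N) \<partial>M)"
    by (simp add: sum.cartesian_product split_def)
  also have "\<dots> \<le> ennreal (C * (1 + (\<Sum>k\<in>{1..d} \<times> {..<n}. a (snd k))) ^ N)"
  proof (rule nn_integral_one_plus_power_sum_le)
    fix k assume "k \<in> {1..d} \<times> {..<n}"
    then obtain j i where ji: "k = (j, i)" "j \<in> {1..d}" by auto
    show "(\<lambda>\<omega>. \<bar>jump_by t (fst k) (snd k) \<omega>\<bar>) \<in> borel_measurable M"
      using jump_by_measurable[OF ji(2)] by (simp add: ji)
    have "(\<integral>\<^sup>+ \<omega>. ennreal (\<bar>jump_by t j i \<omega>\<bar> ^ N) \<partial>M) \<le> ennreal (sqrt (q i) * ((c + 1) / 2))"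
      using nn_integral_jump_by_power_le[OF ji(2) N moment c] by (simp add: q_def)
    also have "\<dots> \<le> ennreal (a i ^ N * C)"
      unfolding a(2) C_def using q[of i] by (intro ennreal_leI mult_left_mono max.cobounded2) simp
    finally show "(\<integral>\<^sup>+ \<omega>. ennreal (\<bar>jump_by t (fst k) (snd k) \<omega>\<bar> ^ N) \<partial>M) \<le> ennreal (a (snd k) ^ N * C)"
      by (simp add: ji)
  qed (use N a in \<open>auto simp: C_def\<close>)
  also have "\<dots> \<le> ennreal (C * (K0 * t) ^ N)"
  proof -
    have "0 \<le> (\<Sum>k\<in>{1..d} \<times> {..<n}. a (snd k))" by (intro sum_nonneg) (simp add: a less_imp_le)
    then show ?thesis by (intro ennreal_leI mult_left_mono power_mono weights) (auto simp: C_def)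
  qed
  also have "C * (K0 * t) ^ N = displacement_moment_const d c N * t ^ N"
    by (simp add: C_def K0_def displacement_moment_const_def power_mult_distrib)
  finally show ?thesis .
qed

lemma nn_integral_displacement_power_le:
  assumes N: "1 \<le> N" and t: "1 \<le> t"
    and moment: "(\<integral>\<^sup>+ y. ennreal (\<bar>y\<bar> ^ (2 * N)) \<partial>\<mu>) \<le> ennreal c" and c: "0 \<le> c"
  shows "(\<integral>\<^sup>+ \<omega>. ennreal ((1 + (\<Sum>l\<in>{1..d}. \<bar>cp_walk x e Xs t \<omega> l - x l\<bar>)) ^ N) \<partial>M)
    \<le> ennreal (displacement_moment_const d c N * t ^ N)"
proof -
  define F where "F n \<omega> = (1 + (\<Sum>j\<in>{1..d}. \<Sum>i<n. \<bar>jump_by t j i \<omega>\<bar>)) ^ N" for n \<omega>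
  have F_measurable: "(\<lambda>\<omega>. ennreal (F n \<omega>)) \<in> borel_measurable M" for n
  proof -
    have [measurable]: "F n \<in> borel_measurable M"
      unfolding F_def[abs_def]
      by (intro borel_measurable_power borel_measurable_add borel_measurable_sum borel_measurable_abs
          jump_by_measurable) auto
    show ?thesis by measurable
  qed
  have F_mono: "incseq (\<lambda>n \<omega>. ennreal (F n \<omega>))"
    unfolding F_def
    by (intro incseq_SucI le_funI ennreal_leI power_mono add_left_mono sum_mono)
      (auto intro!: add_nonneg_nonneg sum_nonneg)
  have "(\<integral>\<^sup>+ \<omega>. ennreal ((1 + (\<Sum>l\<in>{1..d}. \<bar>cp_walk x e Xs t \<omega> l - x l\<bar>)) ^ N) \<partial>M)
      \<le> (\<integral>\<^sup>+ \<omega>. (SUP n. ennreal (F n \<omega>)) \<partial>M)"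
    unfolding F_def by (intro nn_integral_mono) (simp add: cp_walk_eq ennreal_power_abs_suminf_le_SUP)
  also have "\<dots> = (SUP n. \<integral>\<^sup>+ \<omega>. ennreal (F n \<omega>) \<partial>M)"
    using F_mono F_measurable by (rule nn_integral_monotone_convergence_SUP)
  also have "\<dots> \<le> ennreal (displacement_moment_const d c N * t ^ N)"
    unfolding F_def by (intro SUP_least nn_integral_partial_jumps_power_le N t moment c)
  finally show ?thesis .
qed

lemma Delta_cp_walk_moment_le:
  fixes p :: real
  assumes gaps: "\<forall>i\<in>{1..<d}. x (Suc i) - x i \<ge> 1" and p: "0 < p"
    and pN: "p * real (\<Sum>j\<in>{1..d}. j - 1) \<le> real N" and N: "1 \<le> N" and t: "1 \<le> t"
    and moment: "(\<integral>\<^sup>+ y. ennreal (\<bar>y\<bar> ^ (2 * N)) \<partial>\<mu>) \<le> ennreal c" and c: "0 \<le> c"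
  shows "integrable M (\<lambda>\<omega>. \<bar>Delta d (cp_walk x e Xs t \<omega>)\<bar> powr p)
    \<and> (\<integral>\<omega>. \<bar>Delta d (cp_walk x e Xs t \<omega>)\<bar> powr p \<partial>M)
      \<le> Delta d x powr p * (displacement_moment_const d c N * t ^ N)"
proof (rule integrable_integral_le_of_nn_integral_le)
  define U where "U \<omega> = (\<Sum>l\<in>{1..d}. \<bar>cp_walk x e Xs t \<omega> l - x l\<bar>)" for \<omega>
  have U_measurable: "(\<lambda>\<omega>. ennreal ((1 + U \<omega>) ^ N)) \<in> borel_measurable M"
  proof -
    have [measurable]: "U \<in> borel_measurable M"
      unfolding U_def[abs_def]
      by (intro borel_measurable_sum borel_measurable_abs borel_measurable_diff cp_walk_measurable) auto
    show ?thesis by measurable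
  qed
  show "(\<lambda>\<omega>. \<bar>Delta d (cp_walk x e Xs t \<omega>)\<bar> powr p) \<in> borel_measurable M"
    using Delta_cp_walk_measurable by measurable
  have "(\<integral>\<^sup>+ \<omega>. ennreal (\<bar>Delta d (cp_walk x e Xs t \<omega>)\<bar> powr p) \<partial>M)
      \<le> (\<integral>\<^sup>+ \<omega>. ennreal (Delta d x powr p) * ennreal ((1 + U \<omega>) ^ N) \<partial>M)"
  proof (rule nn_integral_mono)
    fix \<omega>
    have "cp_walk x e Xs t \<omega> = (\<lambda>j. x j + (cp_walk x e Xs t \<omega> j - x j))" by simp
    then have "\<bar>Delta d (cp_walk x e Xs t \<omega>)\<bar> powr p \<le> Delta d x powr p * (1 + U \<omega>) ^ N"
      using abs_Delta_add_powr_le[OF gaps p pN] unfolding U_def by metis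
    then show "ennreal (\<bar>Delta d (cp_walk x e Xs t \<omega>)\<bar> powr p)
        \<le> ennreal (Delta d x powr p) * ennreal ((1 + U \<omega>) ^ N)"
      by (simp add: ennreal_mult'[symmetric] ennreal_leI)
  qed
  also have "\<dots> = ennreal (Delta d x powr p) * (\<integral>\<^sup>+ \<omega>. ennreal ((1 + U \<omega>) ^ N) \<partial>M)"
    using U_measurable by (rule nn_integral_cmult)
  also have "\<dots> \<le> ennreal (Delta d x powr p)
      * ennreal (displacement_moment_const d c N * t ^ N)"
    unfolding U_def by (intro mult_left_mono nn_integral_displacement_power_le N t moment c) auto
  finally show "(\<integral>\<^sup>+ \<omega>. ennreal (\<bar>Delta d (cp_walk x e Xs t \<omega>)\<bar> powr p) \<partial>M)
      \<le> ennreal (Delta d x powr p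
        * (displacement_moment_const d c N * t ^ N))"
    by (simp add: ennreal_mult'[symmetric])
  have "0 \<le> displacement_moment_const d c N"
    using N by (simp add: displacement_moment_const_def)
  then show "0 \<le> Delta d x powr p * (displacement_moment_const d c N * t ^ N)"
    using t by simp
qed simp

end

(* Only the exponential moments of X and the gaps of x enter the bound. *)
theorem lemma4p2:
  fixes \<mu> :: "real measure" and p :: real and d :: nat
  assumes law: "prob_space \<mu>" "sets \<mu> = sets borel"
    and mean: "integrable \<mu> (\<lambda>y. y)" "(\<integral>y. y \<partial>\<mu>) = 0"
    and var: "integrable \<mu> (\<lambda>y. y\<^sup>2)" "(\<integral>y. y\<^sup>2 \<partial>\<mu>) = 1"
    and expmom: "\<exists>\<delta>0>0. \<forall>\<delta>. \<bar>\<delta>\<bar> < \<delta>0 \<longrightarrow> integrable \<mu> (\<lambda>y. exp (\<delta> * y))"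
    and p: "p \<ge> 1" and d: "d \<ge> 2"
  shows "\<exists>C::real. \<forall>(M :: 'a measure) (e :: nat \<Rightarrow> nat \<Rightarrow> 'a \<Rightarrow> real)
            (Xs :: nat \<Rightarrow> nat \<Rightarrow> 'a \<Rightarrow> real) (t :: real) (x :: nat \<Rightarrow> real).
      prob_space M
      \<longrightarrow> (\<forall>i j. 1 \<le> i \<longrightarrow> j \<in> {1..d} \<longrightarrow>
             distributed M lborel (e i j) (exponential_density 1)
             \<and> Xs i j \<in> borel_measurable M \<and> distr M borel (Xs i j) = \<mu>)
      \<longrightarrow> prob_space.indep_vars M (\<lambda>_. borel)
            (\<lambda>k. case k of Inl (i, j) \<Rightarrow> e i j | Inr (i, j) \<Rightarrow> Xs i j)
            (Inl ` ({1..} \<times> {1..d}) \<union> Inr ` ({1..} \<times> {1..d}))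
      \<longrightarrow> t \<ge> 1
      \<longrightarrow> x \<in> weyl_chamber d
      \<longrightarrow> (\<forall>i\<in>{1..<d}. x (Suc i) - x i \<ge> 1)
      \<longrightarrow> integrable M (\<lambda>\<omega>. \<bar>Delta d (cp_walk x e Xs t \<omega>)\<bar> powr p)
          \<and> (\<integral>\<omega>. \<bar>Delta d (cp_walk x e Xs t \<omega>)\<bar> powr p \<partial>M) powr (1 / p)
              \<le> C * Delta d x * t ^ (d\<^sup>2)"
proof -
  obtain N where N: "1 \<le> N" "p * real (\<Sum>j\<in>{1..d}. j - 1) \<le> real N" "real N \<le> p * real (d ^ 2)"
    using moment_exponent[OF p d] .
  obtain c where c: "0 \<le> c" and moment: "(\<integral>\<^sup>+ y. ennreal (\<bar>y\<bar> ^ (2 * N)) \<partial>\<mu>) \<le> ennreal c"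
    using nn_integral_abs_power_bounded_of_exp_moments[OF law(2) expmom] .
  show ?thesis
  proof (intro exI[of _ "displacement_moment_const d c N powr (1 / p)"] allI impI)
    fix M :: "'a measure" and e Xs :: "nat \<Rightarrow> nat \<Rightarrow> 'a \<Rightarrow> real" and t :: real and x :: "nat \<Rightarrow> real"
    assume "prob_space M"
      and "\<forall>i j. 1 \<le> i \<longrightarrow> j \<in> {1..d} \<longrightarrow>
             distributed M lborel (e i j) (exponential_density 1)
             \<and> Xs i j \<in> borel_measurable M \<and> distr M borel (Xs i j) = \<mu>"
      and "prob_space.indep_vars M (\<lambda>_. borel)
            (\<lambda>k. case k of Inl (i, j) \<Rightarrow> e i j | Inr (i, j) \<Rightarrow> Xs i j)
            (Inl ` ({1..} \<times> {1..d}) \<union> Inr ` ({1..} \<times> {1..d}))"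
      and t: "t \<ge> 1" and gaps: "\<forall>i\<in>{1..<d}. x (Suc i) - x i \<ge> 1"
    then interpret compound_poisson_walks M \<mu> d e Xs
      by (simp add: compound_poisson_walks_def compound_poisson_walks_axioms_def)
    have int: "integrable M (\<lambda>\<omega>. \<bar>Delta d (cp_walk x e Xs t \<omega>)\<bar> powr p)"
      and le: "(\<integral>\<omega>. \<bar>Delta d (cp_walk x e Xs t \<omega>)\<bar> powr p \<partial>M)
        \<le> Delta d x powr p * (displacement_moment_const d c N * t ^ N)"
      using Delta_cp_walk_moment_le[OF gaps _ N(2,1) t moment c] p by auto
    have "(\<integral>\<omega>. \<bar>Delta d (cp_walk x e Xs t \<omega>)\<bar> powr p \<partial>M) powr (1 / p)
        \<le> displacement_moment_const d c N powr (1 / p) * Delta d x * t ^ d\<^sup>2"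
      by (rule powr_inverse_le_of_le[OF _ le])
        (use p t N(3) Delta_nonneg_of_gaps[OF gaps] in \<open>auto simp: displacement_moment_const_def\<close>)
    with int show "integrable M (\<lambda>\<omega>. \<bar>Delta d (cp_walk x e Xs t \<omega>)\<bar> powr p)
        \<and> (\<integral>\<omega>. \<bar>Delta d (cp_walk x e Xs t \<omega>)\<bar> powr p \<partial>M) powr (1 / p)
          \<le> displacement_moment_const d c N powr (1 / p) * Delta d x * t ^ d\<^sup>2" by simp
  qed
qed

end
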